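(* Assume (a1)–(a3) with constants $L,\beta$, let $l\in\mathbb{R}$ be such that $F+\frac l2\|\cdot\|^2$ is convex, and let $\gamma>0$ satisfy $\Lambda(\gamma)>0$. Suppose $F$, $G$ and $H$ are each bounded below and at least one of them is coercive (i.e. $\liminf_{\|x\|\to\infty}f(x)=\infty$). Then every sequence $\{(x^t,y^t,z^t)\}$ generated by the DYS iteration is bounded.
   Context: Assumptions: (a1) $F:\mathbb{R}^n\to\mathbb{R}$ is differentiable with $L$-Lipschitz gradient; (a2) $G:\mathbb{R}^n\to(-\infty,\infty]$ is proper, lower semicontinuous, and $\arg\min_y\{G(y)+\frac1{2\gamma}\|y-x\|^2\}\neq\emptyset$ for all $x$ and $\gamma>0$; (a3) $H:\mathbb{R}^n\to\mathbb{R}$ is differentiable with $\beta$-Lipschitz gradient. DYS iteration: fix $\gamma>0$, $x^0$; for $t\ge0$, $y^{t+1}\in\arg\min_y\{F(y)+\frac{1}{2\gamma}\|y-x^t\|^2\}$, $z^{t+1}\in\arg\min_z\{G(z)+\frac{1}{2\gamma}\|z-(2y^{t+1}-\gamma\nabla H(y^{t+1})-x^t)\|^2\}$, $x^{t+1}=x^t+(z^{t+1}-y^{t+1})$. $\Lambda(\gamma)=\tfrac12(\tfrac1\gamma-l)-\beta-(\tfrac1\gamma+\tfrac\beta2)[(-1+2\gamma l)+(1+\gamma L)^2]$. *)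

theory Defs
  imports "HOL-Analysis.Analysis"
begin

definition lsc :: "('a::topological_space \<Rightarrow> ereal) \<Rightarrow> bool" where
  "lsc f \<longleftrightarrow> (\<forall>x. f x \<le> Liminf (at x) f)"

definition proper_fun :: "('a \<Rightarrow> ereal) \<Rightarrow> bool" where
  "proper_fun f \<longleftrightarrow> (\<forall>x. f x \<noteq> -\<infinity>) \<and> (\<exists>x. f x \<noteq> \<infinity>)"

definition argmin_set :: "('a \<Rightarrow> 'b::linorder) \<Rightarrow> 'a set" where
  "argmin_set f = {y. \<forall>z. f y \<le> f z}"

definition Lambda :: "real \<Rightarrow> real \<Rightarrow> real \<Rightarrow> real \<Rightarrow> real" where
  "Lambda L l \<beta> \<gamma> =
     (1/2) * (1/\<gamma> - l) - \<beta> - (1/\<gamma> + \<beta>/2) * ((-1 + 2*\<gamma>*l) + (1 + \<gamma>*L)^2)"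

end

theory Submission
  imports Defs
begin

text \<open>The first-order condition of the \<open>F\<close>-step gives \<open>x(t) = y(t+1) + \<gamma>\<nabla>F(y(t+1))\<close>.
  Let \<open>\<Psi>(y, z) = G(z) + F(y) + H(y) + \<langle>\<nabla>F(y) + \<nabla>H(y), z - y\<rangle> + \<parallel>z - y\<parallel>\<^sup>2/(2\<gamma>)\<close>,
  i.e. \<open>G(z)\<close> plus the quadratic upper model of \<open>F + H\<close> around \<open>y\<close> evaluated at \<open>z\<close>.
  Along the iteration \<open>\<Psi>(y(t+1), z(t+1))\<close> is nonincreasing: the \<open>G\<close>-step, the
  weak-convexity lower bound for \<open>F\<close> and the descent lemma for \<open>H\<close> bound the increment by
  \<open>((l + \<beta>)/2 + \<gamma>(L\<^sup>2 + \<beta>L) - 1/(2\<gamma>))\<parallel>y(t+2) - y(t+1)\<parallel>\<^sup>2\<close>, and \<open>\<Lambda>(\<gamma>) > 0\<close> makes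
  this coefficient nonpositive. By the descent lemma \<open>\<Psi>(y, z)\<close> dominates
  \<open>F(z) + H(z) + G(z) + \<kappa>\<parallel>z - y\<parallel>\<^sup>2\<close> with \<open>\<kappa> = 1/(2\<gamma>) - (L + \<beta>)/2\<close>, which is positive
  again by \<open>\<Lambda>(\<gamma>) > 0\<close>. Since \<open>F\<close>, \<open>G\<close>, \<open>H\<close> are bounded below, all of them stay bounded
  above along \<open>z(t)\<close>, and so does \<open>\<parallel>z(t) - y(t)\<parallel>\<close>. Coercivity of one of them bounds
  \<open>z(t)\<close>, hence \<open>y(t)\<close>, and \<open>x(t)\<close> through the Lipschitz map \<open>u \<mapsto> u + \<gamma>\<nabla>F(u)\<close>.\<close>

lemma has_real_derivative_along_line:
  fixes f :: "'a::real_inner \<Rightarrow> real"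
  assumes "\<And>u. GDERIV f u :> g u"
  shows "((\<lambda>t. f (a + t *\<^sub>R d)) has_real_derivative inner d (g (a + t *\<^sub>R d))) (at t)"
proof -
  have "((\<lambda>t. a + t *\<^sub>R d) has_derivative (\<lambda>s. s *\<^sub>R d)) (at t)"
    by (auto intro!: derivative_eq_intros)
  from has_derivative_compose[OF this assms[unfolded gderiv_def]]
  have "((\<lambda>t. f (a + t *\<^sub>R d)) has_derivative (\<lambda>s. inner (s *\<^sub>R d) (g (a + t *\<^sub>R d)))) (at t)"
    by (simp add: o_def)
  moreover have "(\<lambda>s. inner (s *\<^sub>R d) (g (a + t *\<^sub>R d))) = (*) (inner d (g (a + t *\<^sub>R d)))"
    by (auto simp: fun_eq_iff)
  ultimately show ?thesis by (simp add: has_field_derivative_def)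
qed

lemma lipschitz_gradient_descent_lemma:
  fixes f :: "'a::real_inner \<Rightarrow> real"
  assumes grad: "\<And>u. GDERIV f u :> g u" and lip: "K-lipschitz_on UNIV g"
  shows "f b \<le> f a + inner (g a) (b - a) + K/2 * (norm (b - a))\<^sup>2"
proof -
  define d where "d = b - a"
  define \<psi> where "\<psi> t = f (a + t *\<^sub>R d) - t * inner d (g a) - K * t\<^sup>2 / 2 * (norm d)\<^sup>2" for t
  have deriv: "(\<psi> has_real_derivative
      (inner d (g (a + t *\<^sub>R d)) - inner d (g a) - K * t * (norm d)\<^sup>2)) (at t)" for t
    unfolding \<psi>_def by (rule derivative_eq_intros has_real_derivative_along_line[OF grad] | simp)+
  obtain s where s: "0 < s" "s < 1"
    and mvt: "\<psi> 1 - \<psi> 0 = inner d (g (a + s *\<^sub>R d)) - inner d (g a) - K * s * (norm d)\<^sup>2"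
    using MVT2[of 0 1 \<psi>, OF _ deriv] by auto
  have "inner d (g (a + s *\<^sub>R d)) - inner d (g a) = inner d (g (a + s *\<^sub>R d) - g a)"
    by (simp add: inner_diff_right)
  also have "\<dots> \<le> norm d * norm (g (a + s *\<^sub>R d) - g a)"
    by (rule norm_cauchy_schwarz)
  also have "\<dots> \<le> norm d * (K * norm (s *\<^sub>R d))"
    using lipschitz_onD[OF lip, of "a + s *\<^sub>R d" a] by (simp add: dist_norm mult_left_mono)
  also have "\<dots> = K * s * (norm d)\<^sup>2"
    using s by (simp add: power2_eq_square)
  finally have "\<psi> 1 \<le> \<psi> 0" using mvt by simp
  thus ?thesis unfolding \<psi>_def d_def by (simp add: inner_commute)
qed

lemma weakly_convex_tangent_lower_bound:
  fixes f :: "'a::real_inner \<Rightarrow> real"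
  assumes grad: "\<And>u. GDERIV f u :> g u"
    and cvx: "convex_on UNIV (\<lambda>u. f u + l/2 * (norm u)\<^sup>2)"
  shows "f a + inner (g a) (b - a) - l/2 * (norm (b - a))\<^sup>2 \<le> f b"
proof -
  define d where "d = b - a"
  define \<psi> where "\<psi> t = f (a + t *\<^sub>R d) + l/2 * ((norm a)\<^sup>2 + 2 * t * inner a d + t\<^sup>2 * (norm d)\<^sup>2)"
    for t
  have "(norm (a + t *\<^sub>R d))\<^sup>2 = (norm a)\<^sup>2 + 2 * t * inner a d + t\<^sup>2 * (norm d)\<^sup>2" for t
    unfolding power2_norm_eq_inner
    by (simp add: inner_add_left inner_add_right inner_commute power2_eq_square algebra_simps)
  hence \<psi>_eq: "\<psi> t = f (a + t *\<^sub>R d) + l/2 * (norm (a + t *\<^sub>R d))\<^sup>2" for t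
    unfolding \<psi>_def by simp
  have cvx_\<psi>: "convex_on UNIV \<psi>"
  proof (rule convex_onI)
    fix s t u :: real assume s: "0 < s" "s < 1"
    have "a + ((1 - s) * t + s * u) *\<^sub>R d = (1 - s) *\<^sub>R (a + t *\<^sub>R d) + s *\<^sub>R (a + u *\<^sub>R d)"
      by (simp add: algebra_simps)
    then show "\<psi> ((1 - s) *\<^sub>R t + s *\<^sub>R u) \<le> (1 - s) * \<psi> t + s * \<psi> u"
      unfolding \<psi>_eq using convex_onD[OF cvx, of s "a + t *\<^sub>R d" "a + u *\<^sub>R d"] s by simp
  qed simp
  have deriv: "(\<psi> has_real_derivative
      (inner d (g (a + t *\<^sub>R d)) + l/2 * (2 * inner a d + 2 * t * (norm d)\<^sup>2))) (at t)" for t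
    unfolding \<psi>_def
    by (auto intro!: derivative_eq_intros has_real_derivative_along_line[OF grad]
        simp: algebra_simps)
  have "(inner d (g a) + l/2 * (2 * inner a d)) * (1 - 0) \<le> \<psi> 1 - \<psi> 0"
    using convex_on_imp_above_tangent[OF cvx_\<psi>, of 0 1] deriv[of 0] by simp
  thus ?thesis unfolding \<psi>_def d_def by (simp add: inner_commute algebra_simps)
qed

lemma weak_convexity_modulus_ge_neg_lipschitz:
  fixes f :: "'a::euclidean_space \<Rightarrow> real"
  assumes grad: "\<And>u. GDERIV f u :> g u"
    and cvx: "convex_on UNIV (\<lambda>u. f u + l/2 * (norm u)\<^sup>2)"
    and lip: "L-lipschitz_on UNIV g"
  shows "-L \<le> l"
proof -
  obtain e :: 'a where "e \<in> Basis" using nonempty_Basis by blast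
  hence e: "(norm e)\<^sup>2 > 0" by auto
  have "-l * (norm e)\<^sup>2 \<le> inner (g e - g 0) e"
    using weakly_convex_tangent_lower_bound[OF grad cvx, of 0 e]
      weakly_convex_tangent_lower_bound[OF grad cvx, of e 0]
    by (simp add: inner_diff_left inner_diff_right)
  also have "\<dots> \<le> norm (g e - g 0) * norm e"
    by (rule norm_cauchy_schwarz)
  also have "\<dots> \<le> L * (norm e)\<^sup>2"
    using lipschitz_onD[OF lip, of e 0]
    by (simp add: dist_norm power2_eq_square mult_right_mono mult.assoc[symmetric])
  finally have "0 \<le> (L + l) * (norm e)\<^sup>2" by (simp add: algebra_simps)
  thus ?thesis using e by (simp add: zero_le_mult_iff)
qed

lemma prox_argmin_gradient_eq:
  fixes f :: "'a::euclidean_space \<Rightarrow> real"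
  assumes grad: "\<And>u. GDERIV f u :> g u" and c: "c > 0"
    and y: "y \<in> argmin_set (\<lambda>v. f v + 1/(2*c) * (norm (v - x))\<^sup>2)"
  shows "x = y + c *\<^sub>R g y"
proof -
  define \<phi> where "\<phi> v = f v + 1/(2*c) * inner (v - x) (v - x)" for v
  define w where "w = g y + (1/c) *\<^sub>R (y - x)"
  have "(\<phi> has_derivative (\<lambda>h. inner h w)) (at y)"
    using grad[of y] c unfolding gderiv_def \<phi>_def w_def
    by (auto intro!: derivative_eq_intros
        simp: fun_eq_iff field_simps inner_add_right inner_diff_right inner_commute)
  moreover have "\<forall>v\<in>UNIV. \<phi> y \<le> \<phi> v"
    using y unfolding argmin_set_def \<phi>_def power2_norm_eq_inner by auto
  ultimately have "(\<lambda>h. inner h w) = (\<lambda>h. 0)"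
    by (intro differential_zero_maxmin[of y UNIV]) auto
  hence "c *\<^sub>R w = 0" by (metis inner_eq_zero_iff mult_eq_0_iff zero_neq_numeral scaleR_zero_right)
  thus ?thesis using c unfolding w_def by (simp add: algebra_simps)
qed

lemma Lambda_pos_imp_descent_coefficient_nonneg:
  fixes L l \<beta> \<gamma> :: real
  assumes \<gamma>: "\<gamma> > 0" and \<beta>: "\<beta> \<ge> 0" and l: "-L \<le> l"
    and \<Lambda>: "Lambda L l \<beta> \<gamma> > 0"
  shows "(l + \<beta>)/2 + \<gamma> * (L\<^sup>2 + \<beta> * L) \<le> 1/(2*\<gamma>)"
proof -
  have "1/(2*\<gamma>) - (l + \<beta>)/2 - \<gamma> * (L\<^sup>2 + \<beta> * L) - Lambda L l \<beta> \<gamma>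
      = 2 * (l + L) + \<beta> * \<gamma> * (l + L) + \<beta>/2 * (1 - \<gamma> * L)\<^sup>2"
    unfolding Lambda_def using \<gamma> by (simp add: field_simps power2_eq_square)
  moreover have "0 \<le> \<beta> * \<gamma> * (l + L)" using \<gamma> \<beta> l by simp
  moreover have "0 \<le> \<beta>/2 * (1 - \<gamma> * L)\<^sup>2" using \<beta> by simp
  ultimately show ?thesis using \<Lambda> l by (smt (verit))
qed

lemma Lambda_pos_imp_step_size_lt:
  fixes L l \<beta> \<gamma> :: real
  assumes \<gamma>: "\<gamma> > 0" and L: "L \<ge> 0" and \<beta>: "\<beta> \<ge> 0" and l: "-L \<le> l"
    and \<Lambda>: "Lambda L l \<beta> \<gamma> > 0"
  shows "\<gamma> * (L + \<beta>) < 1"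
proof (rule ccontr)
  assume "\<not> \<gamma> * (L + \<beta>) < 1"
  define u where "u = \<gamma> * L"
  define v where "v = \<gamma> * \<beta>"
  define m where "m = \<gamma> * l"
  have u: "u \<ge> 0" and v: "v \<ge> 0" and uv: "u + v \<ge> 1"
    using \<gamma> L \<beta> \<open>\<not> \<gamma> * (L + \<beta>) < 1\<close> unfolding u_def v_def by (auto simp: algebra_simps)
  have m: "m \<ge> -u"
    using mult_left_mono[OF l, of \<gamma>] \<gamma> unfolding u_def m_def by simp
  have "\<gamma> * Lambda L l \<beta> \<gamma> = 1/2 - m/2 - v - (1 + v/2) * (2*u + u\<^sup>2 + 2*m)"
    unfolding Lambda_def u_def v_def m_def using \<gamma> by (simp add: field_simps power2_eq_square)
  also have "\<dots> \<le> 1/2 + u/2 - v - (1 + v/2) * u\<^sup>2"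
    using mult_left_mono[of "-2*u" "2*m" "1 + v/2"] m v by (simp add: algebra_simps)
  also have "\<dots> \<le> 0"
  proof (cases "u \<ge> 1")
    case True
    have "(1 - u) * (1 + 2*u) \<le> 0" using True by (intro mult_nonpos_nonneg) auto
    moreover have "0 \<le> v/2 * u\<^sup>2" using v by simp
    ultimately show ?thesis using v by (simp add: algebra_simps power2_eq_square)
  next
    case False
    have "0 \<le> (v - (1 - u)) * (1 + u\<^sup>2/2)" using uv by simp
    moreover have "0 \<le> (1 - u)^3" using False by simp
    moreover have "1/2 + u/2 - v - (1 + v/2) * u\<^sup>2 = -(v - (1 - u)) * (1 + u\<^sup>2/2) - (1 - u)^3/2"
      by (simp add: field_simps power2_eq_square power3_eq_cube)
    ultimately show ?thesis by linarith
  qed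
  finally show False using \<gamma> \<Lambda> by (simp add: mult_le_0_iff)
qed

text \<open>Completing the square turns a comparison of the prox objective centred at
  \<open>v - c p\<close> into one of its linearisation around \<open>v\<close>.\<close>
lemma shifted_prox_comparison:
  fixes v w1 w2 p :: "'a::real_inner" and r1 r2 c :: real
  assumes c: "c > 0"
    and "r2 + 1/(2*c) * (norm (w2 - (v - c *\<^sub>R p)))\<^sup>2 \<le> r1 + 1/(2*c) * (norm (w1 - (v - c *\<^sub>R p)))\<^sup>2"
  shows "r2 + inner p (w2 - v) + 1/(2*c) * (norm (w2 - v))\<^sup>2
      \<le> r1 + inner p (w1 - v) + 1/(2*c) * (norm (w1 - v))\<^sup>2"
proof -
  have "1/(2*c) * (norm (w - (v - c *\<^sub>R p)))\<^sup>2
      = 1/(2*c) * (norm (w - v))\<^sup>2 + inner p (w - v) + c/2 * (norm p)\<^sup>2" for w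
  proof -
    have "(norm ((w - v) + c *\<^sub>R p))\<^sup>2 = (norm (w - v))\<^sup>2 + 2 * c * inner (w - v) p + c\<^sup>2 * (norm p)\<^sup>2"
      unfolding power2_norm_eq_inner
      by (simp add: inner_add_left inner_add_right inner_commute power2_eq_square)
    thus ?thesis using c by (simp add: field_simps inner_commute power2_eq_square)
  qed
  thus ?thesis using assms(2) by simp
qed

lemma bounded_range_if_coercive_ereal:
  fixes f :: "'a::real_normed_vector \<Rightarrow> ereal"
  assumes "(f \<longlongrightarrow> \<infinity>) at_infinity" and "\<And>t. f (s t) \<le> ereal M"
  shows "bounded (range s)"
proof -
  have "eventually (\<lambda>u. ereal M < f u) at_infinity"
    using assms(1) unfolding tendsto_PInfty by blast
  then obtain b where "\<And>u. norm u \<ge> b \<Longrightarrow> ereal M < f u"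
    unfolding eventually_at_infinity by auto
  hence "norm (s t) \<le> b" for t
    using assms(2)[of t] by (meson linorder_not_le not_less_iff_gr_or_eq order_le_less_trans)
  thus ?thesis unfolding bounded_iff by blast
qed

lemma bounded_range_if_coercive:
  fixes f :: "'a::real_normed_vector \<Rightarrow> real"
  assumes "filterlim f at_top at_infinity" and "\<And>t. f (s t) \<le> M"
  shows "bounded (range s)"
  using bounded_range_if_coercive_ereal[of "\<lambda>u. ereal (f u)" s M] assms
  by (simp add: tendsto_PInfty_eq_at_top)

lemma bounded_range_if_bounded_range_Suc:
  assumes "bounded (range (\<lambda>t. f (Suc t)))"
  shows "bounded (range f)"
proof -
  have "range f \<subseteq> insert (f 0) (range (\<lambda>t. f (Suc t)))"
  proof
    fix v assume "v \<in> range f"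
    then obtain n where "v = f n" by blast
    thus "v \<in> insert (f 0) (range (\<lambda>t. f (Suc t)))" by (cases n) auto
  qed
  thus ?thesis using assms bounded_insert bounded_subset by metis
qed

locale dys_iteration =
  fixes F H :: "'a::euclidean_space \<Rightarrow> real"
    and gradF gradH :: "'a \<Rightarrow> 'a"
    and G :: "'a \<Rightarrow> ereal"
    and L \<beta> l \<gamma> :: real
    and x y z :: "nat \<Rightarrow> 'a"
  assumes F_grad: "\<And>u. GDERIV F u :> gradF u"
    and F_lip: "L-lipschitz_on UNIV gradF"
    and G_proper: "proper_fun G"
    and H_grad: "\<And>u. GDERIV H u :> gradH u"
    and H_lip: "\<beta>-lipschitz_on UNIV gradH"
    and weak_cvx: "convex_on UNIV (\<lambda>u. F u + l/2 * (norm u)\<^sup>2)"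
    and gamma_pos: "\<gamma> > 0"
    and Lambda_pos: "Lambda L l \<beta> \<gamma> > 0"
    and y_step: "\<And>t. y (Suc t) \<in> argmin_set (\<lambda>v. F v + 1/(2*\<gamma>) * (norm (v - x t))\<^sup>2)"
    and z_step: "\<And>t. z (Suc t) \<in> argmin_set (\<lambda>w. G w + ereal (1/(2*\<gamma>) *
                   (norm (w - (2 *\<^sub>R y (Suc t) - \<gamma> *\<^sub>R gradH (y (Suc t)) - x t)))\<^sup>2))"
    and x_step: "\<And>t. x (Suc t) = x t + (z (Suc t) - y (Suc t))"
begin

lemma x_eq_resolvent: "x t = y (Suc t) + \<gamma> *\<^sub>R gradF (y (Suc t))"
  by (rule prox_argmin_gradient_eq[OF F_grad gamma_pos y_step])

lemma step_size_lt: "\<gamma> * (L + \<beta>) < 1"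
  using Lambda_pos_imp_step_size_lt[OF gamma_pos lipschitz_on_nonneg[OF F_lip]
      lipschitz_on_nonneg[OF H_lip]
      weak_convexity_modulus_ge_neg_lipschitz[OF F_grad weak_cvx F_lip] Lambda_pos] .

definition Gz :: "nat \<Rightarrow> real" where
  "Gz t = real_of_ereal (G (z (Suc t)))"

lemma G_z_eq: "G (z (Suc t)) = ereal (Gz t)"
proof -
  obtain w where w: "G w \<noteq> \<infinity>" using G_proper unfolding proper_fun_def by auto
  have "G (z (Suc t)) \<noteq> \<infinity>"
  proof
    assume "G (z (Suc t)) = \<infinity>"
    moreover have "G (z (Suc t)) + ereal (1/(2*\<gamma>) *
          (norm (z (Suc t) - (2 *\<^sub>R y (Suc t) - \<gamma> *\<^sub>R gradH (y (Suc t)) - x t)))\<^sup>2)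
        \<le> G w + ereal (1/(2*\<gamma>) * (norm (w - (2 *\<^sub>R y (Suc t) - \<gamma> *\<^sub>R gradH (y (Suc t)) - x t)))\<^sup>2)"
      using z_step[of t] unfolding argmin_set_def by blast
    ultimately show False using w by (cases "G w") auto
  qed
  moreover have "G (z (Suc t)) \<noteq> -\<infinity>" using G_proper unfolding proper_fun_def by auto
  ultimately show ?thesis unfolding Gz_def by (cases "G (z (Suc t))") auto
qed

text \<open>The merit function \<open>\<Psi>(v, w)\<close>, with \<open>r\<close> standing for the value \<open>G w\<close>.\<close>
definition merit_at :: "'a \<Rightarrow> 'a \<Rightarrow> real \<Rightarrow> real" where
  "merit_at v w r = F v + H v + r + inner (gradF v + gradH v) (w - v)
     + 1/(2*\<gamma>) * (norm (w - v))\<^sup>2"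

definition merit :: "nat \<Rightarrow> real" where
  "merit t = merit_at (y (Suc t)) (z (Suc t)) (Gz t)"

lemma smooth_part_gap_estimate:
  "(F v2 - F v1 - inner (gradF v2) (v2 - v1)) + (H v2 - H v1 - inner (gradH v1) (v2 - v1))
     + \<gamma> * (norm (gradF v2 - gradF v1))\<^sup>2 + \<gamma> * inner (gradH v2 - gradH v1) (gradF v2 - gradF v1)
   \<le> ((l + \<beta>)/2 + \<gamma> * (L\<^sup>2 + \<beta> * L)) * (norm (v2 - v1))\<^sup>2"
proof -
  define d where "d = v2 - v1"
  define \<delta> where "\<delta> = gradF v2 - gradF v1"
  define \<eta> where "\<eta> = gradH v2 - gradH v1"
  have "F v2 - F v1 - inner (gradF v2) d \<le> l/2 * (norm d)\<^sup>2"
    using weakly_convex_tangent_lower_bound[OF F_grad weak_cvx, of v2 v1]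
    unfolding d_def by (simp add: inner_diff_right norm_minus_commute)
  moreover have "H v2 - H v1 - inner (gradH v1) d \<le> \<beta>/2 * (norm d)\<^sup>2"
    using lipschitz_gradient_descent_lemma[OF H_grad H_lip, of v2 v1] unfolding d_def by simp
  moreover have "(norm \<delta>)\<^sup>2 \<le> L\<^sup>2 * (norm d)\<^sup>2"
    using lipschitz_onD[OF F_lip, of v2 v1] lipschitz_on_nonneg[OF F_lip]
    unfolding \<delta>_def d_def dist_norm power_mult_distrib[symmetric]
    by (intro power_mono) auto
  moreover have "inner \<eta> \<delta> \<le> \<beta> * L * (norm d)\<^sup>2"
  proof -
    have "inner \<eta> \<delta> \<le> norm \<eta> * norm \<delta>" by (rule norm_cauchy_schwarz)
    also have "\<dots> \<le> (\<beta> * norm d) * (L * norm d)"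
      using lipschitz_onD[OF H_lip, of v2 v1] lipschitz_onD[OF F_lip, of v2 v1]
        lipschitz_on_nonneg[OF H_lip]
      unfolding \<eta>_def \<delta>_def d_def dist_norm by (intro mult_mono) auto
    finally show ?thesis by (simp add: power2_eq_square algebra_simps)
  qed
  ultimately have "\<gamma> * (norm \<delta>)\<^sup>2 + \<gamma> * inner \<eta> \<delta> \<le> \<gamma> * (L\<^sup>2 * (norm d)\<^sup>2) + \<gamma> * (\<beta> * L * (norm d)\<^sup>2)"
    using gamma_pos by (intro add_mono mult_left_mono) auto
  moreover have "((l + \<beta>)/2 + \<gamma> * (L\<^sup>2 + \<beta> * L)) * (norm d)\<^sup>2
      = l/2 * (norm d)\<^sup>2 + \<beta>/2 * (norm d)\<^sup>2 + \<gamma> * (L\<^sup>2 * (norm d)\<^sup>2) + \<gamma> * (\<beta> * L * (norm d)\<^sup>2)"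
    by (simp add: algebra_simps)
  ultimately show ?thesis
    using \<open>F v2 - F v1 - _ \<le> _\<close> \<open>H v2 - H v1 - _ \<le> _\<close> unfolding d_def \<delta>_def \<eta>_def by linarith
qed

lemma merit_at_decrease:
  assumes w1: "w1 = v2 + \<gamma> *\<^sub>R (gradF v2 - gradF v1)"
    and prox: "r2 + 1/(2*\<gamma>) * (norm (w2 - (v2 - \<gamma> *\<^sub>R (gradF v2 + gradH v2))))\<^sup>2
      \<le> r1 + 1/(2*\<gamma>) * (norm (w1 - (v2 - \<gamma> *\<^sub>R (gradF v2 + gradH v2))))\<^sup>2"
  shows "merit_at v2 w2 r2 \<le> merit_at v1 w1 r1"
proof -
  define d where "d = v2 - v1"
  define \<delta> where "\<delta> = gradF v2 - gradF v1"
  define \<eta> where "\<eta> = gradH v2 - gradH v1"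
  let ?c = "1/(2*\<gamma>)"
  have "merit_at v2 w2 r2 \<le> F v2 + H v2 + r1 + inner (gradF v2 + gradH v2) (w1 - v2)
      + ?c * (norm (w1 - v2))\<^sup>2"
    using shifted_prox_comparison[OF gamma_pos prox] unfolding merit_at_def by simp
  also have "\<dots> = merit_at v1 w1 r1 + (F v2 - F v1 - inner (gradF v2) d)
      + (H v2 - H v1 - inner (gradH v1) d) + \<gamma> * (norm \<delta>)\<^sup>2 + \<gamma> * inner \<eta> \<delta> - ?c * (norm d)\<^sup>2"
  proof -
    have "w1 - v2 = \<gamma> *\<^sub>R \<delta>" and "w1 - v1 = d + \<gamma> *\<^sub>R \<delta>"
      unfolding w1 \<delta>_def d_def by simp_all
    moreover have "gradF v2 = gradF v1 + \<delta>" and "gradH v2 = gradH v1 + \<eta>"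
      unfolding \<delta>_def \<eta>_def by simp_all
    moreover have "(norm (d + \<gamma> *\<^sub>R \<delta>))\<^sup>2 = (norm d)\<^sup>2 + 2 * \<gamma> * inner d \<delta> + \<gamma>\<^sup>2 * (norm \<delta>)\<^sup>2"
      unfolding power2_norm_eq_inner
      by (simp add: inner_add_left inner_add_right inner_commute power2_eq_square)
    moreover have "inner \<delta> \<delta> = (norm \<delta>)\<^sup>2" by (simp add: power2_norm_eq_inner)
    ultimately show ?thesis
      unfolding merit_at_def using gamma_pos
      by (simp add: inner_add_left inner_add_right inner_commute power2_eq_square field_simps)
  qed
  also have "\<dots> \<le> merit_at v1 w1 r1 + ((l + \<beta>)/2 + \<gamma> * (L\<^sup>2 + \<beta> * L) - ?c) * (norm d)\<^sup>2"
    using smooth_part_gap_estimate[of v2 v1] unfolding d_def \<delta>_def \<eta>_def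
    by (simp add: left_diff_distrib)
  also have "\<dots> \<le> merit_at v1 w1 r1"
    using Lambda_pos_imp_descent_coefficient_nonneg[OF gamma_pos lipschitz_on_nonneg[OF H_lip]
        weak_convexity_modulus_ge_neg_lipschitz[OF F_grad weak_cvx F_lip] Lambda_pos]
    by (simp add: mult_nonpos_nonneg)
  finally show ?thesis .
qed

lemma merit_Suc_le: "merit (Suc t) \<le> merit t"
  unfolding merit_def
proof (rule merit_at_decrease)
  let ?y1 = "y (Suc t)" and ?y2 = "y (Suc (Suc t))" and ?z1 = "z (Suc t)" and ?z2 = "z (Suc (Suc t))"
  show "?z1 = ?y2 + \<gamma> *\<^sub>R (gradF ?y2 - gradF ?y1)"
    using x_step[of t] x_eq_resolvent[of t] x_eq_resolvent[of "Suc t"] by (simp add: algebra_simps)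
  have "2 *\<^sub>R ?y2 - \<gamma> *\<^sub>R gradH ?y2 - x (Suc t) = ?y2 - \<gamma> *\<^sub>R (gradF ?y2 + gradH ?y2)"
    using x_eq_resolvent[of "Suc t"] by (simp add: algebra_simps scaleR_2)
  moreover have "G ?z2 + ereal (1/(2*\<gamma>) * (norm (?z2 - (2 *\<^sub>R ?y2 - \<gamma> *\<^sub>R gradH ?y2 - x (Suc t))))\<^sup>2)
      \<le> G ?z1 + ereal (1/(2*\<gamma>) * (norm (?z1 - (2 *\<^sub>R ?y2 - \<gamma> *\<^sub>R gradH ?y2 - x (Suc t))))\<^sup>2)"
    using z_step[of "Suc t"] unfolding argmin_set_def by blast
  ultimately show "Gz (Suc t) + 1/(2*\<gamma>) * (norm (?z2 - (?y2 - \<gamma> *\<^sub>R (gradF ?y2 + gradH ?y2))))\<^sup>2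
      \<le> Gz t + 1/(2*\<gamma>) * (norm (?z1 - (?y2 - \<gamma> *\<^sub>R (gradF ?y2 + gradH ?y2))))\<^sup>2"
    by (simp add: G_z_eq)
qed

lemma merit_le_merit_0: "merit t \<le> merit 0"
  using decseq_SucI[of merit, OF merit_Suc_le] by (simp add: decseq_def)

lemma merit_lower_bound:
  "F (z (Suc t)) + H (z (Suc t)) + Gz t
     + (1/(2*\<gamma>) - (L + \<beta>)/2) * (norm (z (Suc t) - y (Suc t)))\<^sup>2 \<le> merit t"
proof -
  have "F (z (Suc t)) \<le> F (y (Suc t)) + inner (gradF (y (Suc t))) (z (Suc t) - y (Suc t))
      + L/2 * (norm (z (Suc t) - y (Suc t)))\<^sup>2"
    by (rule lipschitz_gradient_descent_lemma[OF F_grad F_lip])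
  moreover have "H (z (Suc t)) \<le> H (y (Suc t)) + inner (gradH (y (Suc t))) (z (Suc t) - y (Suc t))
      + \<beta>/2 * (norm (z (Suc t) - y (Suc t)))\<^sup>2"
    by (rule lipschitz_gradient_descent_lemma[OF H_grad H_lip])
  ultimately show ?thesis
    unfolding merit_def merit_at_def by (simp add: inner_add_left algebra_simps add_divide_distrib)
qed

lemma iterates_bounded_above:
  assumes F: "\<And>u. cF \<le> F u" and H: "\<And>u. cH \<le> H u" and G: "\<And>u. ereal cG \<le> G u"
  obtains M where "\<And>t. F (z (Suc t)) \<le> M" "\<And>t. H (z (Suc t)) \<le> M" "\<And>t. G (z (Suc t)) \<le> ereal M"
    "\<And>t. norm (z (Suc t) - y (Suc t)) \<le> M"
proof -
  define \<kappa> where "\<kappa> = 1/(2*\<gamma>) - (L + \<beta>)/2"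
  define A where "A = merit 0 - cF - cH - cG"
  have \<kappa>: "\<kappa> > 0"
    using step_size_lt gamma_pos unfolding \<kappa>_def by (simp add: field_simps)
  have cG: "cG \<le> Gz t" for t using G[of "z (Suc t)"] by (simp add: G_z_eq)
  have excess: "(F (z (Suc t)) - cF) + (H (z (Suc t)) - cH) + (Gz t - cG)
      + \<kappa> * (norm (z (Suc t) - y (Suc t)))\<^sup>2 \<le> A" for t
    using merit_lower_bound[of t] merit_le_merit_0[of t] unfolding A_def \<kappa>_def by linarith
  have nonneg: "0 \<le> \<kappa> * (norm (z (Suc t) - y (Suc t)))\<^sup>2" for t using \<kappa> by simp
  define M where "M = A + \<bar>cF\<bar> + \<bar>cH\<bar> + \<bar>cG\<bar> + sqrt (A / \<kappa>)"
  show ?thesis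
  proof
    fix t
    have bound: "F (z (Suc t)) - cF \<le> A" "H (z (Suc t)) - cH \<le> A" "Gz t - cG \<le> A"
      "\<kappa> * (norm (z (Suc t) - y (Suc t)))\<^sup>2 \<le> A"
      using excess[of t] nonneg[of t] F[of "z (Suc t)"] H[of "z (Suc t)"] cG[of t] by linarith+
    have "0 \<le> A" using bound(4) nonneg[of t] by linarith
    hence M: "A + \<bar>cF\<bar> + \<bar>cH\<bar> + \<bar>cG\<bar> \<le> M" "sqrt (A / \<kappa>) \<le> M"
      unfolding M_def using \<kappa> by auto
    show "F (z (Suc t)) \<le> M" and "H (z (Suc t)) \<le> M" and "G (z (Suc t)) \<le> ereal M"
      using bound M(1) by (auto simp: G_z_eq)
    have "(norm (z (Suc t) - y (Suc t)))\<^sup>2 \<le> A / \<kappa>"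
      using bound(4) \<kappa> by (simp add: field_simps mult.commute)
    thus "norm (z (Suc t) - y (Suc t)) \<le> M"
      using real_le_rsqrt M(2) by fastforce
  qed
qed

lemma bounded_iterates:
  assumes z: "bounded (range (\<lambda>t. z (Suc t)))"
    and zy: "bounded (range (\<lambda>t. z (Suc t) - y (Suc t)))"
  shows "bounded (range x) \<and> bounded (range y) \<and> bounded (range z)"
proof -
  have y: "bounded (range (\<lambda>t. y (Suc t)))"
    using bounded_minus_comp[OF z zy] by simp
  have "bounded (gradF ` range (\<lambda>t. y (Suc t)))"
    using bounded_uniformly_continuous_image[OF lipschitz_on_uniformly_continuous y]
      lipschitz_on_subset[OF F_lip] by blast
  hence "bounded (range (\<lambda>t. y (Suc t) + \<gamma> *\<^sub>R gradF (y (Suc t))))"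
    using bounded_plus_comp[OF y bounded_scaleR_comp] by (simp add: image_image)
  hence "bounded (range x)" by (simp add: x_eq_resolvent)
  thus ?thesis using z y bounded_range_if_bounded_range_Suc by blast
qed

end

text \<open>The iterates are given.\<close>
theorem mainTheorem3:
  fixes F H :: "'a::euclidean_space \<Rightarrow> real"
    and gradF gradH :: "'a \<Rightarrow> 'a"
    and G :: "'a \<Rightarrow> ereal"
    and L \<beta> l \<gamma> :: real
    and x y z :: "nat \<Rightarrow> 'a"
  assumes a1_grad: "\<And>u. GDERIV F u :> gradF u"
    and a1_lip: "L-lipschitz_on UNIV gradF"
    and a2_proper: "proper_fun G"
    and a2_lsc: "lsc G"
    and a2_prox: "\<And>u c. c > 0 \<Longrightarrow>
        argmin_set (\<lambda>v. G v + ereal (1/(2*c) * (norm (v - u))^2)) \<noteq> {}"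
    and a3_grad: "\<And>u. GDERIV H u :> gradH u"
    and a3_lip: "\<beta>-lipschitz_on UNIV gradH"
    and weak_cvx: "convex_on UNIV (\<lambda>u. F u + l/2 * (norm u)^2)"
    and gamma_pos: "\<gamma> > 0"
    and Lambda_pos: "Lambda L l \<beta> \<gamma> > 0"
    and F_bdd: "\<exists>c. \<forall>u. c \<le> F u"
    and G_bdd: "\<exists>c::real. \<forall>u. ereal c \<le> G u"
    and H_bdd: "\<exists>c. \<forall>u. c \<le> H u"
    and coercive: "filterlim F at_top at_infinity \<or> (G \<longlongrightarrow> \<infinity>) at_infinity
                   \<or> filterlim H at_top at_infinity"
    and y_step: "\<And>t. y (Suc t) \<in> argmin_set (\<lambda>v. F v + 1/(2*\<gamma>) * (norm (v - x t))^2)"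
    and z_step: "\<And>t. z (Suc t) \<in> argmin_set (\<lambda>w. G w + ereal (1/(2*\<gamma>) *
                   (norm (w - (2 *\<^sub>R y (Suc t) - \<gamma> *\<^sub>R gradH (y (Suc t)) - x t)))^2))"
    and x_step: "\<And>t. x (Suc t) = x t + (z (Suc t) - y (Suc t))"
  shows "bounded (range x) \<and> bounded (range y) \<and> bounded (range z)"
proof -
  interpret dys_iteration F H gradF gradH G L \<beta> l \<gamma> x y z
    using assms by unfold_locales auto
  obtain cF cH cG where lower: "\<And>u. cF \<le> F u" "\<And>u. cH \<le> H u" "\<And>u. ereal cG \<le> G u"
    using F_bdd G_bdd H_bdd by blast
  obtain M where F_z: "\<And>t. F (z (Suc t)) \<le> M" and H_z: "\<And>t. H (z (Suc t)) \<le> M"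
    and G_z: "\<And>t. G (z (Suc t)) \<le> ereal M" and z_y: "\<And>t. norm (z (Suc t) - y (Suc t)) \<le> M"
    using iterates_bounded_above[OF lower] by blast
  have "bounded (range (\<lambda>t. z (Suc t)))"
    using coercive bounded_range_if_coercive[of _ "\<lambda>t. z (Suc t)"] F_z H_z
      bounded_range_if_coercive_ereal[of G "\<lambda>t. z (Suc t)"] G_z by blast
  moreover have "bounded (range (\<lambda>t. z (Suc t) - y (Suc t)))"
    using z_y unfolding bounded_iff by blast
  ultimately show ?thesis by (rule bounded_iterates)
qed

end
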